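(* Let $(S,* )$ be a finite cycle set of size $n\ge 2$ which is square-free (i.e. $s*s=s$ for all $s\in S$) and whose permutation group $\mathcal G$ is abelian. Then its class $d$ satisfies $$d\le a_n:=\max\Big\{\prod_{i=1}^k n_i \;\Big|\; k\in\mathbb N,\ 1\le n_1<\dots<n_k,\ n_1+\dots+n_k=n\Big\}.$$
   Context: A cycle set is a set $S$ with a binary operation $*$ such that for every $s$ the map $t\mapsto s*t$ is a bijection and $(s*t)*(s*u)=(t*s)*(t*u)$ for all $s,t,u$. Write $S=\{s_1,\dots,s_n\}$ and let $\psi(s)\in\mathfrak S_n$ satisfy $s_i*s_j=s_{\psi(s_i)(j)}$. The permutation group $\mathcal G$ is the subgroup of $\mathfrak S_n$ generated by $\psi(s_1),\dots,\psi(s_n)$. With $T(s)=s*s$ and $\psi_k(s)=\psi(T^{k-1}(s))\circ\cdots\circ\psi(T(s))\circ\psi(s)$, the (Dehornoy) class $d$ is the least integer $d\ge1$ such that $\psi_d(s)=\mathrm{id}$ for all $s\in S$. *)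

theory Defs
  imports "HOL-Algebra.Bij" "HOL-Algebra.Generated_Groups"
begin

definition cycle_set :: "'a set \<Rightarrow> ('a \<Rightarrow> 'a \<Rightarrow> 'a) \<Rightarrow> bool" where
  "cycle_set S op \<longleftrightarrow>
     (\<forall>s\<in>S. \<forall>t\<in>S. op s t \<in> S) \<and>
     (\<forall>s\<in>S. bij_betw (op s) S S) \<and>
     (\<forall>s\<in>S. \<forall>t\<in>S. \<forall>u\<in>S. op (op s t) (op s u) = op (op t s) (op t u))"

definition square_free :: "'a set \<Rightarrow> ('a \<Rightarrow> 'a \<Rightarrow> 'a) \<Rightarrow> bool" where
  "square_free S op \<longleftrightarrow> (\<forall>s\<in>S. op s s = s)"

definition psi :: "'a set \<Rightarrow> ('a \<Rightarrow> 'a \<Rightarrow> 'a) \<Rightarrow> 'a \<Rightarrow> ('a \<Rightarrow> 'a)" where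
  "psi S op s = (\<lambda>t\<in>S. op s t)"

definition perm_group :: "'a set \<Rightarrow> ('a \<Rightarrow> 'a \<Rightarrow> 'a) \<Rightarrow> ('a \<Rightarrow> 'a) set" where
  "perm_group S op = generate (BijGroup S) (psi S op ` S)"

definition perm_group_abelian :: "'a set \<Rightarrow> ('a \<Rightarrow> 'a \<Rightarrow> 'a) \<Rightarrow> bool" where
  "perm_group_abelian S op \<longleftrightarrow>
     (\<forall>f\<in>perm_group S op. \<forall>g\<in>perm_group S op.
        f \<otimes>\<^bsub>BijGroup S\<^esub> g = g \<otimes>\<^bsub>BijGroup S\<^esub> f)"

fun psik :: "'a set \<Rightarrow> ('a \<Rightarrow> 'a \<Rightarrow> 'a) \<Rightarrow> nat \<Rightarrow> 'a \<Rightarrow> ('a \<Rightarrow> 'a)" where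
  "psik S op 0 s = (\<lambda>t\<in>S. t)"
| "psik S op (Suc k) s = compose S (psi S op (((\<lambda>x. op x x) ^^ k) s)) (psik S op k s)"

definition cs_class :: "'a set \<Rightarrow> ('a \<Rightarrow> 'a \<Rightarrow> 'a) \<Rightarrow> nat" where
  "cs_class S op = (LEAST d. d \<ge> 1 \<and> (\<forall>s\<in>S. \<forall>t\<in>S. psik S op d s t = t))"

definition a_seq :: "nat \<Rightarrow> nat" where
  "a_seq n = Max {prod_list ns | ns. sorted_wrt (<) ns \<and> (\<forall>x\<in>set ns. 1 \<le> x) \<and> sum_list ns = n}"

end

theory Submission
  imports Defs "HOL-Combinatorics.Orbits"
begin

text \<open>
  For a square-free cycle set, \<open>\<psi>\<^sub>k(s) = \<psi>(s)\<^sup>k\<close>, and if \<open>\<G>\<close> is abelian every \<open>\<psi>(s)\<close>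
  commutes with all of \<open>\<G>\<close>. Hence \<open>\<psi>(s)\<^sup>k\<close> fixes one point of a \<open>\<G>\<close>-orbit \<open>O\<close> iff it
  fixes all of them, so all cycles of \<open>\<psi>(s)\<close> inside \<open>O\<close> have the same length, which
  therefore divides \<open>|O|\<close>. The class thus divides the lcm of the distinct orbit sizes; these
  are distinct positive integers of sum at most \<open>n\<close>, so their lcm is bounded by their
  product and that by \<open>a\<^sub>n\<close>.
\<close>

lemma self_in_orbit_if_bij_betw:
  assumes "finite S" "bij_betw f S S" "x \<in> S"
  shows "x \<in> orbit f x"
proof -
  define g where "g y = (if y \<in> S then f y else y)" for y
  have "bij_betw g S S"
    using assms(2) by (rule bij_betw_cong[THEN iffD1, rotated]) (simp add: g_def)
  then have "g permutes S"
    by (rule bij_imp_permutes) (simp add: g_def)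
  then have "x \<in> orbit g x"
    using assms(1) by (intro permutation_self_in_orbit) (auto simp: permutation_permutes)
  moreover have "orbit f x = orbit g x"
    using assms(2,3) by (intro orbit_cong0) (auto simp: g_def bij_betw_def)
  ultimately show ?thesis by simp
qed

lemma card_orbit_eq_funpow_dist1:
  assumes "x \<in> orbit f x"
  shows "card (orbit f x) = funpow_dist1 f x x"
  using card_image[OF inj_on_funpow_dist1[OF assms]] orbit_conv_funpow_dist1[OF assms] by simp

lemma funpow_eq_self_iff_card_orbit_dvd:
  assumes "x \<in> orbit f x"
  shows "(f ^^ n) x = x \<longleftrightarrow> card (orbit f x) dvd n"
proof -
  define p where "p = card (orbit f x)"
  have p: "0 < p" "(f ^^ p) x = x"
    using funpow_dist1_prop[OF assms] card_orbit_eq_funpow_dist1[OF assms] by (simp_all add: p_def)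
  have mod_eq: "(f ^^ (n mod p)) x = (f ^^ n) x"
    using p(2) by (rule funpow_mod_eq)
  show ?thesis
  proof
    assume "(f ^^ n) x = x"
    then have "(f ^^ (n mod p)) x = x" using mod_eq by simp
    then have "n mod p = 0"
      using funpow_dist1_least[of "n mod p" f x x] p(1)
      by (metis card_orbit_eq_funpow_dist1[OF assms] mod_less_divisor neq0_conv p_def)
    then show "card (orbit f x) dvd n" by (simp add: p_def mod_eq_0_iff_dvd)
  next
    assume "card (orbit f x) dvd n"
    then show "(f ^^ n) x = x" using mod_eq by (simp add: p_def)
  qed
qed

lemma dvd_card_if_cycles_of_equal_length:
  assumes "finite A" "f ` A \<subseteq> A"
    and periodic: "\<And>x. x \<in> A \<Longrightarrow> x \<in> orbit f x"
    and cycle_length: "\<And>x. x \<in> A \<Longrightarrow> card (orbit f x) = k"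
  shows "k dvd card A"
proof -
  define r where "r = {(x, y). x \<in> A \<and> y \<in> orbit f x}"
  have orbit_subset: "orbit f x \<subseteq> A" if "x \<in> A" for x
  proof
    fix y assume "y \<in> orbit f x"
    then show "y \<in> A" by induction (use that assms(2) in auto)
  qed
  have "equiv A r"
  proof (rule equivI)
    show "r \<subseteq> A \<times> A" using orbit_subset by (auto simp: r_def)
    show "refl_on A r" using periodic by (auto simp: r_def refl_on_def)
    show "sym r" using periodic orbit_subset by (auto simp: r_def sym_def intro: orbit_swap)
    show "trans r" by (auto simp: r_def trans_def intro: orbit_trans)
  qed
  moreover have "k dvd card X" if "X \<in> A // r" for X
    using that cycle_length by (auto simp: r_def quotient_def Image_def)
  ultimately show ?thesis by (rule equiv_imp_dvd_card[OF assms(1)])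
qed

locale commuting_permutations =
  fixes S :: "'a set" and I :: "'i set" and \<sigma> :: "'i \<Rightarrow> 'a \<Rightarrow> 'a"
  assumes finite_S: "finite S"
    and bij_betw_\<sigma>: "i \<in> I \<Longrightarrow> bij_betw (\<sigma> i) S S"
    and \<sigma>_commute: "i \<in> I \<Longrightarrow> j \<in> I \<Longrightarrow> x \<in> S \<Longrightarrow> \<sigma> i (\<sigma> j x) = \<sigma> j (\<sigma> i x)"
begin

definition step :: "('a \<times> 'a) set" where
  "step = {(x, \<sigma> i x) | i x. i \<in> I \<and> x \<in> S}"

text \<open>Its classes are the orbits of the group generated by the permutations \<^term>\<open>\<sigma> i\<close>.\<close>
definition orbit_rel :: "('a \<times> 'a) set" where
  "orbit_rel = Restr ((step \<union> step\<inverse>)\<^sup>*) S"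

lemma equiv_orbit_rel: "equiv S orbit_rel"
proof (rule equivI)
  show "orbit_rel \<subseteq> S \<times> S" "refl_on S orbit_rel"
    by (auto simp: orbit_rel_def refl_on_def)
  show "sym orbit_rel"
    unfolding orbit_rel_def using symD[OF sym_rtrancl[OF sym_Un_converse[of step]]]
    by (auto simp: sym_def)
  show "trans orbit_rel"
    unfolding orbit_rel_def by (auto simp: trans_def intro: rtrancl_trans)
qed

lemma \<sigma>_in_S: "i \<in> I \<Longrightarrow> x \<in> S \<Longrightarrow> \<sigma> i x \<in> S"
  using bij_betw_\<sigma> by (auto simp: bij_betw_def)

lemma funpow_\<sigma>_in_S: "i \<in> I \<Longrightarrow> x \<in> S \<Longrightarrow> (\<sigma> i ^^ n) x \<in> S"
  by (induction n) (auto simp: \<sigma>_in_S)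

lemma funpow_\<sigma>_commute:
  "i \<in> I \<Longrightarrow> j \<in> I \<Longrightarrow> x \<in> S \<Longrightarrow> (\<sigma> i ^^ n) (\<sigma> j x) = \<sigma> j ((\<sigma> i ^^ n) x)"
  by (induction n) (auto simp: \<sigma>_commute funpow_\<sigma>_in_S)

lemma funpow_fixes_\<sigma>_iff:
  assumes "i \<in> I" "j \<in> I" "x \<in> S"
  shows "(\<sigma> i ^^ n) (\<sigma> j x) = \<sigma> j x \<longleftrightarrow> (\<sigma> i ^^ n) x = x"
  using bij_betw_\<sigma>[OF assms(2)] funpow_\<sigma>_in_S[OF assms(1,3)] assms
  by (auto simp: funpow_\<sigma>_commute bij_betw_def inj_on_def)

lemma funpow_fixes_iff_orbit_rel:
  assumes "i \<in> I" "(x, y) \<in> orbit_rel"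
  shows "(\<sigma> i ^^ n) y = y \<longleftrightarrow> (\<sigma> i ^^ n) x = x"
proof -
  have "(x, y) \<in> (step \<union> step\<inverse>)\<^sup>*" using assms(2) by (simp add: orbit_rel_def)
  then show ?thesis
  proof (induction rule: rtrancl_induct)
    case (step y z)
    then consider j where "j \<in> I" "y \<in> S" "z = \<sigma> j y" | j where "j \<in> I" "z \<in> S" "y = \<sigma> j z"
      by (auto simp: step_def)
    then show ?case using step.IH funpow_fixes_\<sigma>_iff[OF assms(1)] by cases auto
  qed simp
qed

lemma card_orbit_dvd_card_class:
  assumes "i \<in> I" "x \<in> S"
  shows "card (orbit (\<sigma> i) x) dvd card (orbit_rel `` {x})"
proof (rule dvd_card_if_cycles_of_equal_length)
  have class_subset: "orbit_rel `` {x} \<subseteq> S" by (auto simp: orbit_rel_def)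
  then show "finite (orbit_rel `` {x})" using finite_S by (rule finite_subset)
  show "\<sigma> i ` (orbit_rel `` {x}) \<subseteq> orbit_rel `` {x}"
  proof (rule image_subsetI)
    fix y assume "y \<in> orbit_rel `` {x}"
    then have "(x, y) \<in> orbit_rel" by simp
    moreover have "(y, \<sigma> i y) \<in> orbit_rel"
      using \<open>(x, y) \<in> orbit_rel\<close> assms(1) \<sigma>_in_S
      by (auto simp: orbit_rel_def step_def intro!: r_into_rtrancl)
    ultimately show "\<sigma> i y \<in> orbit_rel `` {x}"
      using equiv_orbit_rel by (auto elim!: equivE dest: transD)
  qed
  fix y assume y: "y \<in> orbit_rel `` {x}"
  then show periodic: "y \<in> orbit (\<sigma> i) y"
    using class_subset finite_S bij_betw_\<sigma>[OF assms(1)] by (auto intro: self_in_orbit_if_bij_betw)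
  have x_periodic: "x \<in> orbit (\<sigma> i) x"
    using assms finite_S bij_betw_\<sigma> by (auto intro: self_in_orbit_if_bij_betw)
  have "card (orbit (\<sigma> i) y) dvd n \<longleftrightarrow> card (orbit (\<sigma> i) x) dvd n" for n
    using funpow_fixes_iff_orbit_rel[OF assms(1), of x y] y
      funpow_eq_self_iff_card_orbit_dvd[OF periodic] funpow_eq_self_iff_card_orbit_dvd[OF x_periodic]
    by simp
  then show "card (orbit (\<sigma> i) y) = card (orbit (\<sigma> i) x)"
    by (metis dvd_antisym dvd_refl)
qed

lemma funpow_Lcm_card_classes:
  assumes "i \<in> I" "x \<in> S"
  shows "(\<sigma> i ^^ Lcm (card ` (S // orbit_rel))) x = x"
proof -
  have "card (orbit_rel `` {x}) dvd Lcm (card ` (S // orbit_rel))"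
    using assms(2) by (auto intro: dvd_Lcm quotientI)
  then have "card (orbit (\<sigma> i) x) dvd Lcm (card ` (S // orbit_rel))"
    using card_orbit_dvd_card_class[OF assms] by (rule dvd_trans[rotated])
  moreover have "x \<in> orbit (\<sigma> i) x"
    using finite_S bij_betw_\<sigma>[OF assms(1)] assms(2) by (rule self_in_orbit_if_bij_betw)
  ultimately show ?thesis by (simp add: funpow_eq_self_iff_card_orbit_dvd)
qed

lemma zero_notin_card_classes: "0 \<notin> card ` (S // orbit_rel)"
proof
  assume "0 \<in> card ` (S // orbit_rel)"
  then obtain X where X: "X \<in> S // orbit_rel" "card X = 0" by auto
  have "finite X" using finite_equiv_class[OF finite_S equiv_type[OF equiv_orbit_rel] X(1)] .
  moreover have "X \<noteq> {}" using in_quotient_imp_non_empty[OF equiv_orbit_rel X(1)] .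
  ultimately show False using X(2) by simp
qed

lemma sum_card_classes_le: "\<Sum>(card ` (S // orbit_rel)) \<le> card S"
proof -
  have "\<Sum>(card ` (S // orbit_rel)) \<le> (\<Sum>X \<in> S // orbit_rel. card X)"
    using sum_image_le[of "S // orbit_rel" id card] finite_S equiv_orbit_rel
    by (simp add: finite_quotient equiv_type)
  also have "\<dots> = card (\<Union>(S // orbit_rel))"
    using equiv_orbit_rel finite_S
    by (intro card_Union_disjoint[symmetric])
      (auto simp: pairwise_def disjnt_def dest: quotient_disj finite_equiv_class[OF _ equiv_type])
  also have "\<dots> = card S" using equiv_orbit_rel by (simp add: Union_quotient)
  finally show ?thesis .
qed

end

lemma finite_a_seq_candidates:
  "finite {prod_list ns | ns. sorted_wrt (<) ns \<and> (\<forall>x\<in>set ns. 1 \<le> x) \<and> sum_list ns = (n::nat)}"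
proof (rule finite_subset)
  have "length ns \<le> sum_list ns" if "\<forall>x\<in>set ns. (1::nat) \<le> x" for ns
    using that by (induction ns) auto
  then show "{prod_list ns | ns. sorted_wrt (<) ns \<and> (\<forall>x\<in>set ns. 1 \<le> x) \<and> sum_list ns = n}
      \<subseteq> prod_list ` {ns. set ns \<subseteq> {0..n} \<and> length ns \<le> n}"
    by (force dest: member_le_sum_list)
  show "finite (prod_list ` {ns. set ns \<subseteq> {0..n} \<and> length ns \<le> n})"
    using finite_lists_length_le[of "{0..n}" n] by simp
qed

lemma prod_le_a_seq_if_sum_eq:
  assumes "finite D" "0 \<notin> D" "\<Sum>D = n"
  shows "\<Prod>D \<le> a_seq n"
proof -
  define ns where "ns = sorted_list_of_set D"
  have ns: "set ns = D" "distinct ns" "sorted_wrt (<) ns"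
    using assms(1) by (auto simp: ns_def)
  have "sum_list ns = n" "prod_list ns = \<Prod>D"
    using sum_list_distinct_conv_sum_set[OF ns(2), of id] prod.distinct_set_conv_list[OF ns(2), of id]
      ns(1) assms(3) by simp_all
  moreover have "\<forall>x\<in>set ns. 1 \<le> x" using ns(1) assms(2) by (metis One_nat_def Suc_leI neq0_conv)
  ultimately show ?thesis
    unfolding a_seq_def using ns(3) by (intro Max_ge[OF finite_a_seq_candidates]) force
qed

text \<open>The slack \<^term>\<open>n - \<Sum>D\<close> is added to the largest element, which keeps the elements distinct.\<close>
lemma prod_le_a_seq:
  assumes "finite D" "D \<noteq> {}" "0 \<notin> D" "\<Sum>D \<le> n"
  shows "\<Prod>D \<le> a_seq n"
proof -
  define m where "m = Max D"
  define D' where "D' = insert (m + (n - \<Sum>D)) (D - {m})"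
  have m: "m \<in> D" "\<And>x. x \<in> D \<Longrightarrow> x \<le> m" using assms(1,2) by (simp_all add: m_def)
  have fresh: "m + (n - \<Sum>D) \<notin> D - {m}" using m(2) by fastforce
  have "\<Sum>D' = n"
    using sum.remove[OF assms(1) m(1), of id] assms(1,4) fresh by (simp add: D'_def)
  moreover have "\<Prod>D \<le> \<Prod>D'"
    using prod.remove[OF assms(1) m(1), of id] assms(1) fresh by (simp add: D'_def)
  moreover have "0 \<notin> D'" using assms(3) m(1) by (auto simp: D'_def)
  ultimately show ?thesis
    using prod_le_a_seq_if_sum_eq[of D' n] assms(1) by (simp add: D'_def)
qed

lemma Lcm_le_prod_nat:
  assumes "finite D" "0 \<notin> (D :: nat set)"
  shows "Lcm D \<le> \<Prod>D"
proof (rule dvd_imp_le)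
  show "Lcm D dvd \<Prod>D" using assms(1) by (auto intro: Lcm_least dvd_prodI)
  show "0 < \<Prod>D" using assms(2) by (intro prod_pos) (metis neq0_conv)
qed

lemma left_comm_if_perm_group_abelian:
  assumes "cycle_set S op" "perm_group_abelian S op" "s \<in> S" "t \<in> S" "u \<in> S"
  shows "op s (op t u) = op t (op s u)"
proof -
  have psi_Bij: "psi S op r \<in> Bij S" if "r \<in> S" for r
    using assms(1) that
    by (auto simp: Bij_def cycle_set_def psi_def bij_betw_cong[of S "\<lambda>t. op r t"])
  have "psi S op s \<in> perm_group S op" "psi S op t \<in> perm_group S op"
    using assms(3,4) by (auto simp: perm_group_def intro: generate.incl)
  then have "psi S op s \<otimes>\<^bsub>BijGroup S\<^esub> psi S op t = psi S op t \<otimes>\<^bsub>BijGroup S\<^esub> psi S op s"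
    using assms(2) by (simp add: perm_group_abelian_def)
  then have "compose S (psi S op s) (psi S op t) u = compose S (psi S op t) (psi S op s) u"
    using psi_Bij assms(3,4) by (simp add: BijGroup_def)
  then show ?thesis using assms(1,3-5) by (simp add: compose_def psi_def cycle_set_def)
qed

lemma psik_eq_funpow:
  assumes "cycle_set S op" "square_free S op" "s \<in> S" "t \<in> S"
  shows "psik S op k s t = (op s ^^ k) t"
proof -
  have "((\<lambda>x. op x x) ^^ j) s = s" for j
    using assms(2,3) by (induction j) (auto simp: square_free_def)
  moreover have "(op s ^^ j) t \<in> S" for j
    using assms(1,3,4) by (induction j) (auto simp: cycle_set_def)
  ultimately show ?thesis
    using assms(4) by (induction k) (auto simp: compose_def psi_def)
qed

theorem mainTheorem4:
  fixes S :: "'a set" and op :: "'a \<Rightarrow> 'a \<Rightarrow> 'a" and n :: nat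
  assumes "finite S" and "card S = n" and "n \<ge> 2"
    and "cycle_set S op"
    and "square_free S op"
    and "perm_group_abelian S op"
  shows "cs_class S op \<le> a_seq n"
proof -
  interpret commuting_permutations S S op
  proof
    show "bij_betw (op s) S S" if "s \<in> S" for s
      using assms(4) that by (simp add: cycle_set_def)
  qed (use assms(1) left_comm_if_perm_group_abelian[OF assms(4,6)] in auto)
  define D where "D = card ` (S // orbit_rel)"
  have D: "finite D" "D \<noteq> {}" "0 \<notin> D" "\<Sum>D \<le> n"
    using finite_S assms(2,3) equiv_orbit_rel zero_notin_card_classes sum_card_classes_le
    by (auto simp: D_def finite_quotient equiv_type)
  have "cs_class S op \<le> Lcm D"
    unfolding cs_class_def
  proof (rule Least_le, intro conjI ballI)
    show "1 \<le> Lcm D" using D(3) Lcm_0_iff[OF D(1)] by (metis One_nat_def Suc_leI neq0_conv)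
    show "psik S op (Lcm D) s t = t" if "s \<in> S" "t \<in> S" for s t
      using that assms(4,5) funpow_Lcm_card_classes by (simp add: psik_eq_funpow D_def)
  qed
  also have "Lcm D \<le> \<Prod>D" using D(1,3) by (rule Lcm_le_prod_nat)
  also have "\<Prod>D \<le> a_seq n" using D by (rule prod_le_a_seq)
  finally show ?thesis .
qed

end
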